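(* Let $\mathbb{K}$ be a field and $n\ge2$ an integer. Let $Q=\{(2,2),(3,3),\dots,(n+2,n+2)\}$ and $P=\{(1,1)\}\cup\big(\{2,\dots,n+2\}^2\setminus Q\big)$, viewed as subsets of $\{1,\dots,n+2\}^2$. Then the CI-problem $(P,Q,n+2)$ is solvable over $\mathbb{K}$ if and only if the characteristic of $\mathbb{K}$ divides $n$.
   Context: A constrained invertibility (CI) problem is a triple $(P,Q,N)$ with $P,Q\subseteq\{1,\dots,N\}^2$; it is solvable over $\mathbb{K}$ if there is an invertible $N\times N$ matrix $A$ over $\mathbb{K}$ with $A_{i,j}=0$ for all $(i,j)\in P$ and $(A^{-1})_{i',j'}=0$ for all $(i',j')\in Q$. "Characteristic divides $n$" means $n\cdot1_{\mathbb{K}}=0$ (in particular it fails in characteristic $0$ unless... $n=0$, which is excluded). *)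

theory Defs
  imports "Jordan_Normal_Form.Matrix"
begin

text \<open>A matrix of size N is a Jordan_Normal_Form matrix in carrier_mat N N; entry (i,j)
  (1-based) is A $$ (i-1, j-1).\<close>

definition CI_solvable :: "(nat \<times> nat) set \<Rightarrow> (nat \<times> nat) set \<Rightarrow> nat \<Rightarrow> 'a::field itself \<Rightarrow> bool" where
  "CI_solvable P Q N TYPE_K \<longleftrightarrow>
     (\<exists>A B :: 'a mat. A \<in> carrier_mat N N \<and> B \<in> carrier_mat N N \<and>
        A * B = 1\<^sub>m N \<and> B * A = 1\<^sub>m N \<and>
        (\<forall>(i,j)\<in>P. A $$ (i - 1, j - 1) = 0) \<and>
        (\<forall>(i,j)\<in>Q. B $$ (i - 1, j - 1) = 0))"

definition Q7 :: "nat \<Rightarrow> (nat \<times> nat) set" where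
  "Q7 n = {(i, i) | i. i \<in> {2..n+2}}"

definition P7 :: "nat \<Rightarrow> (nat \<times> nat) set" where
  "P7 n = {(1,1)} \<union> (({2..n+2} \<times> {2..n+2}) - Q7 n)"

end

theory Submission
  imports Defs
begin

text \<open>Shift to 0-based indices.  The constraints then say that A has a zero corner entry and is
  diagonal on the block {1..n+1}, while B vanishes on the diagonal of that block.  Hence
  (B A)(j,j) = 1 collapses to B(j,0) A(0,j) = 1 for every j \<ge> 1, and then (A B)(0,0) = 1 reads
  n + 1 = 1.  Conversely, if n = 0 in the field, the bordered identity [0, u^T; u, I], with u the
  all-ones vector, has inverse [-1, u^T; u, I - J], J the all-ones matrix; both matrices are
  symmetric, so one product suffices.\<close>

lemma ball_pos_pairs_shift:
  assumes "\<And>i j. (i, j) \<in> S \<Longrightarrow> 0 < i \<and> 0 < j"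
  shows "(\<forall>(i, j)\<in>S. R (i - 1) (j - 1)) \<longleftrightarrow> (\<forall>k j. (Suc k, Suc j) \<in> S \<longrightarrow> R k j)"
proof
  assume "\<forall>(i, j)\<in>S. R (i - 1) (j - 1)"
  then show "\<forall>k j. (Suc k, Suc j) \<in> S \<longrightarrow> R k j" by fastforce
next
  assume shifted: "\<forall>k j. (Suc k, Suc j) \<in> S \<longrightarrow> R k j"
  show "\<forall>(i, j)\<in>S. R (i - 1) (j - 1)"
  proof clarify
    fix i j assume "(i, j) \<in> S"
    then have "(Suc (i - 1), Suc (j - 1)) \<in> S" using assms by force
    then show "R (i - 1) (j - 1)" using shifted by blast
  qed
qed

lemma index_mult_mat_split_first:
  fixes A B :: "'a::comm_ring mat"
  assumes "A \<in> carrier_mat N N" "B \<in> carrier_mat N N" "i < N" "j < N"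
  shows "(A * B) $$ (i, j) = A $$ (i, 0) * B $$ (0, j) + (\<Sum>k\<in>{1..<N}. A $$ (i, k) * B $$ (k, j))"
proof -
  have "(A * B) $$ (i, j) = (\<Sum>k\<in>{0..<N}. A $$ (i, k) * B $$ (k, j))"
    using assms by (simp add: scalar_prod_def)
  also have "\<dots> = A $$ (i, 0) * B $$ (0, j) + (\<Sum>k\<in>{1..<N}. A $$ (i, k) * B $$ (k, j))"
    using assms(3) by (simp add: sum.atLeast_Suc_lessThan)
  finally show ?thesis .
qed

lemma sum_if_eq_else_const:
  fixes c d :: "'a::comm_ring_1"
  assumes "finite S" "j \<in> S"
  shows "(\<Sum>k\<in>S. if k = j then c else d) = c + of_nat (card S - 1) * d"
proof -
  have "(\<Sum>k\<in>S. if k = j then c else d) = c + (\<Sum>k\<in>S - {j}. if k = j then c else d)"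
    using assms by (simp add: sum.remove)
  also have "(\<Sum>k\<in>S - {j}. if k = j then c else d) = (\<Sum>k\<in>S - {j}. d)"
    by (rule sum.cong) auto
  finally show ?thesis
    using assms by (simp add: card_Diff_singleton)
qed

lemma Suc_mem_P7_iff:
  "(Suc k, Suc j) \<in> P7 n \<longleftrightarrow> (k, j) = (0, 0) \<or> (k \<in> {1..<n+2} \<and> j \<in> {1..<n+2} \<and> k \<noteq> j)"
  by (auto simp: P7_def Q7_def)

lemma P7_pos: "(i, j) \<in> P7 n \<Longrightarrow> 0 < i \<and> 0 < j"
  by (auto simp: P7_def)

lemma Suc_mem_Q7_iff: "(Suc k, Suc j) \<in> Q7 n \<longleftrightarrow> k = j \<and> j \<in> {1..<n+2}"
  by (auto simp: Q7_def)

lemma Q7_pos: "(i, j) \<in> Q7 n \<Longrightarrow> 0 < i \<and> 0 < j"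
  by (auto simp: Q7_def)

lemma P7_zero_iff:
  "(\<forall>(i, j)\<in>P7 n. A $$ (i - 1, j - 1) = 0) \<longleftrightarrow>
     A $$ (0, 0) = 0 \<and> (\<forall>k\<in>{1..<n+2}. \<forall>j\<in>{1..<n+2}. k \<noteq> j \<longrightarrow> A $$ (k, j) = 0)"
proof -
  have "(\<forall>(i, j)\<in>P7 n. A $$ (i - 1, j - 1) = 0) \<longleftrightarrow> (\<forall>k j. (Suc k, Suc j) \<in> P7 n \<longrightarrow> A $$ (k, j) = 0)"
    by (rule ball_pos_pairs_shift[OF P7_pos])
  then show ?thesis by (auto simp: Suc_mem_P7_iff)
qed

lemma Q7_zero_iff:
  "(\<forall>(i, j)\<in>Q7 n. B $$ (i - 1, j - 1) = 0) \<longleftrightarrow> (\<forall>j\<in>{1..<n+2}. B $$ (j, j) = 0)"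
proof -
  have "(\<forall>(i, j)\<in>Q7 n. B $$ (i - 1, j - 1) = 0) \<longleftrightarrow> (\<forall>k j. (Suc k, Suc j) \<in> Q7 n \<longrightarrow> B $$ (k, j) = 0)"
    by (rule ball_pos_pairs_shift[OF Q7_pos])
  then show ?thesis by (auto simp: Suc_mem_Q7_iff)
qed

lemma inverse_pair_pattern_of_nat_eq_one:
  fixes A B :: "'a::comm_ring_1 mat"
  assumes A: "A \<in> carrier_mat N N" and B: "B \<in> carrier_mat N N"
    and AB: "A * B = 1\<^sub>m N" and BA: "B * A = 1\<^sub>m N" and "0 < N"
    and corner: "A $$ (0, 0) = 0"
    and off_diag: "\<forall>k\<in>{1..<N}. \<forall>j\<in>{1..<N}. k \<noteq> j \<longrightarrow> A $$ (k, j) = 0"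
    and diag: "\<forall>j\<in>{1..<N}. B $$ (j, j) = 0"
  shows "of_nat (N - 1) = (1::'a)"
proof -
  have border: "A $$ (0, j) * B $$ (j, 0) = 1" if j: "j \<in> {1..<N}" for j
  proof -
    have block: "B $$ (j, k) * A $$ (k, j) = 0" if "k \<in> {1..<N}" for k
      using that j diag off_diag by (cases "k = j") auto
    have "1 = (B * A) $$ (j, j)"
      using BA j by simp
    also have "\<dots> = B $$ (j, 0) * A $$ (0, j)"
      using index_mult_mat_split_first[OF B A, of j j] j block by simp
    finally show ?thesis by (simp add: mult.commute)
  qed
  have "1 = (A * B) $$ (0, 0)"
    using AB \<open>0 < N\<close> by simp
  also have "\<dots> = (\<Sum>k\<in>{1..<N}. 1)"
    using index_mult_mat_split_first[OF A B, of 0 0] \<open>0 < N\<close> corner border by simp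
  finally show ?thesis by simp
qed

definition bordered_identity_mat :: "nat \<Rightarrow> 'a::comm_ring_1 mat" where
  "bordered_identity_mat N = mat N N (\<lambda>(i, j).
     if i = 0 \<and> j = 0 then 0 else if i = 0 \<or> j = 0 then 1 else if i = j then 1 else 0)"

definition bordered_hollow_mat :: "nat \<Rightarrow> 'a::comm_ring_1 mat" where
  "bordered_hollow_mat N = mat N N (\<lambda>(i, j).
     if i = 0 \<and> j = 0 then -1 else if i = 0 \<or> j = 0 then 1 else if i = j then 0 else -1)"

lemma bordered_identity_mat_carrier: "bordered_identity_mat N \<in> carrier_mat N N"
  by (simp add: bordered_identity_mat_def)

lemma bordered_hollow_mat_carrier: "bordered_hollow_mat N \<in> carrier_mat N N"
  by (simp add: bordered_hollow_mat_def)

lemma transpose_bordered_identity_mat: "transpose_mat (bordered_identity_mat N) = bordered_identity_mat N"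
  by (rule eq_matI) (auto simp: bordered_identity_mat_def)

lemma transpose_bordered_hollow_mat: "transpose_mat (bordered_hollow_mat N) = bordered_hollow_mat N"
  by (rule eq_matI) (auto simp: bordered_hollow_mat_def)

lemma bordered_identity_mult_hollow:
  assumes "of_nat n = (0::'a::comm_ring_1)"
  shows "bordered_identity_mat (n + 2) * bordered_hollow_mat (n + 2) = (1\<^sub>m (n + 2) :: 'a mat)"
proof (rule eq_matI)
  let ?A = "bordered_identity_mat (n + 2) :: 'a mat" and ?B = "bordered_hollow_mat (n + 2) :: 'a mat"
  fix i j assume "i < dim_row (1\<^sub>m (n + 2) :: 'a mat)" "j < dim_col (1\<^sub>m (n + 2) :: 'a mat)"
  then have ij: "i < n + 2" "j < n + 2" by auto
  have column_sum: "(\<Sum>k\<in>{1..<n+2}. ?B $$ (k, j)) = (if j = 0 then 1 else 0)"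
  proof (cases "j = 0")
    case True
    then have "(\<Sum>k\<in>{1..<n+2}. ?B $$ (k, j)) = (\<Sum>k\<in>{1..<n+2}. 1)"
      using ij by (intro sum.cong) (auto simp: bordered_hollow_mat_def)
    then show ?thesis using True assms by simp
  next
    case False
    then have "(\<Sum>k\<in>{1..<n+2}. ?B $$ (k, j)) = (\<Sum>k\<in>{1..<n+2}. if k = j then 0 else -1)"
      using ij by (intro sum.cong) (auto simp: bordered_hollow_mat_def)
    also have "\<dots> = 0 + of_nat (card {1..<n+2} - 1) * (-1)"
      using False ij by (intro sum_if_eq_else_const) auto
    also have "\<dots> = 0"
      using assms by simp
    finally show ?thesis
      using False by simp
  qed
  have block_sum: "(\<Sum>k\<in>{1..<n+2}. ?A $$ (i, k) * ?B $$ (k, j))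
      = (\<Sum>k\<in>{1..<n+2}. if i = 0 then ?B $$ (k, j) else if k = i then ?B $$ (i, j) else 0)"
    using ij by (intro sum.cong) (auto simp: bordered_identity_mat_def)
  have "(?A * ?B) $$ (i, j) = ?A $$ (i, 0) * ?B $$ (0, j) + (\<Sum>k\<in>{1..<n+2}. ?A $$ (i, k) * ?B $$ (k, j))"
    by (rule index_mult_mat_split_first[OF bordered_identity_mat_carrier bordered_hollow_mat_carrier ij])
  also have "\<dots> = ?A $$ (i, 0) * ?B $$ (0, j) + (if i = 0 then (\<Sum>k\<in>{1..<n+2}. ?B $$ (k, j)) else ?B $$ (i, j))"
    unfolding block_sum using ij by (simp del: One_nat_def)
  also have "\<dots> = ?A $$ (i, 0) * ?B $$ (0, j) + (if i = 0 then (if j = 0 then 1 else 0) else ?B $$ (i, j))"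
    by (simp only: column_sum)
  also have "\<dots> = 1\<^sub>m (n + 2) $$ (i, j)"
    using ij by (simp add: bordered_identity_mat_def bordered_hollow_mat_def)
  finally show "(?A * ?B) $$ (i, j) = 1\<^sub>m (n + 2) $$ (i, j)" .
qed (simp_all add: bordered_identity_mat_def bordered_hollow_mat_def)

lemma bordered_hollow_mult_identity:
  assumes "of_nat n = (0::'a::comm_ring_1)"
  shows "bordered_hollow_mat (n + 2) * bordered_identity_mat (n + 2) = (1\<^sub>m (n + 2) :: 'a mat)"
proof -
  have "bordered_hollow_mat (n + 2) * bordered_identity_mat (n + 2)
      = transpose_mat (bordered_identity_mat (n + 2) * bordered_hollow_mat (n + 2) :: 'a mat)"
    by (simp add: transpose_mult[OF bordered_identity_mat_carrier bordered_hollow_mat_carrier]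
        transpose_bordered_identity_mat transpose_bordered_hollow_mat)
  then show ?thesis
    using bordered_identity_mult_hollow[OF assms] by simp
qed

theorem mainTheorem7:
  fixes n :: nat
  assumes "n \<ge> 2"
  shows "CI_solvable (P7 n) (Q7 n) (n + 2) TYPE('a::field) \<longleftrightarrow> of_nat n = (0::'a)"
proof
  assume "CI_solvable (P7 n) (Q7 n) (n + 2) TYPE('a::field)"
  then obtain A B :: "'a mat" where "A \<in> carrier_mat (n + 2) (n + 2)" "B \<in> carrier_mat (n + 2) (n + 2)"
    "A * B = 1\<^sub>m (n + 2)" "B * A = 1\<^sub>m (n + 2)" "A $$ (0, 0) = 0"
    "\<forall>k\<in>{1..<n+2}. \<forall>j\<in>{1..<n+2}. k \<noteq> j \<longrightarrow> A $$ (k, j) = 0"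
    "\<forall>j\<in>{1..<n+2}. B $$ (j, j) = 0"
    unfolding CI_solvable_def P7_zero_iff Q7_zero_iff by blast
  then have "of_nat (n + 2 - 1) = (1::'a)"
    by (intro inverse_pair_pattern_of_nat_eq_one) auto
  then show "of_nat n = (0::'a)" by simp
next
  assume "of_nat n = (0::'a)"
  then show "CI_solvable (P7 n) (Q7 n) (n + 2) TYPE('a::field)"
    unfolding CI_solvable_def P7_zero_iff Q7_zero_iff
    using bordered_identity_mult_hollow bordered_hollow_mult_identity
      bordered_identity_mat_carrier bordered_hollow_mat_carrier
    by (intro exI[of _ "bordered_identity_mat (n + 2)"] exI[of _ "bordered_hollow_mat (n + 2)"])
      (auto simp: bordered_identity_mat_def bordered_hollow_mat_def)
qed

end
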